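(* Let $\mathcal F$ be an RKHS on $\mathcal Z$ with kernel $K$, equipped with the RKHS norm $\|\cdot\|_K$, and let $U,\delta,\lambda>0$. Then for any $h$, $$\sup_{f\in\mathcal F}\ \Psi_n(h,f)-\lambda\Big(\|f\|_K^2+\frac U{\delta^2}\|f\|_{2,n}^2\Big)=\frac1{4\lambda}\psi_n^\top K_n^{1/2}\Big(\frac U{n\delta^2}K_n+I\Big)^{-1}K_n^{1/2}\psi_n=\frac1{4\lambda}\psi_n^\top K_n\Big(\frac U{n\delta^2}K_n+I\Big)^{-1}\psi_n,$$ where $K_n=(K(z_i,z_j))_{i,j=1}^n$ and $\psi_n=(\frac1n(y_i-h(x_i)))_{i=1}^n$.
   Context: Samples $(y_i,x_i,z_i)_{i=1}^n$. $\Psi_n(h,f)=\frac1n\sum_i(y_i-h(x_i))f(z_i)$ and $\|f\|_{2,n}^2=\frac1n\sum_if(z_i)^2$. *)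

theory Defs
  imports "HOL-Analysis.Analysis"
begin

text \<open>An RKHS on the type 'z with kernel K: a Hilbert space 'f whose elements are
  identified (injectively) with functions 'z => real via ev, such that for every z the
  kernel section K(.,z) belongs to the space and reproduces evaluation at z.\<close>
definition rkhs :: "('f::{real_inner,complete_space} \<Rightarrow> 'z \<Rightarrow> real) \<Rightarrow> ('z \<Rightarrow> 'z \<Rightarrow> real) \<Rightarrow> bool" where
  "rkhs ev K \<longleftrightarrow> inj ev \<and>
     (\<forall>z. \<exists>k. (\<forall>w. ev k w = K w z) \<and> (\<forall>f. ev f z = inner f k))"

definition psd_mat :: "real^'n^'n \<Rightarrow> bool" where
  "psd_mat S \<longleftrightarrow> transpose S = S \<and> (\<forall>v. 0 \<le> v \<bullet> (S *v v))"

definition psd_sqrt :: "real^'n^'n \<Rightarrow> real^'n^'n" where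
  "psd_sqrt A = (THE S. psd_mat S \<and> S ** S = A)"

end

theory Submission
  imports Defs
begin

text \<open>
  Write \<open>k\<^sub>i\<close> for the kernel section at \<open>z\<^sub>i\<close> and \<open>c = U / (n \<delta>\<^sup>2)\<close>. By the reproducing
  property the objective is \<open>J f = \<langle>f, \<Sum>\<^sub>i \<psi>\<^sub>i k\<^sub>i\<rangle> - \<lambda> (\<parallel>f\<parallel>\<^sup>2 + c \<Sum>\<^sub>i \<langle>f, k\<^sub>i\<rangle>\<^sup>2)\<close>,
  a concave quadratic. The candidate maximiser \<open>f\<^sub>0 = \<Sum>\<^sub>j a\<^sub>j k\<^sub>j\<close> with
  \<open>(c K\<^sub>n + I) a = \<psi>\<^sub>n / (2 \<lambda>)\<close> satisfies the first-order condition, and completing the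
  square gives \<open>J f = J f\<^sub>0 - \<lambda> Q (f - f\<^sub>0)\<close> with \<open>Q \<ge> 0\<close>; hence the supremum is
  \<open>J f\<^sub>0 = \<psi>\<^sub>n \<bullet> K\<^sub>n a / 2\<close>. The second identity holds because the square root of \<open>K\<^sub>n\<close> commutes
  with \<open>c K\<^sub>n + I\<close> and hence with its inverse. That the principal square root is well defined
  (exists and is unique) follows from the spectral theorem for symmetric matrices, which is
  obtained by maximising the Rayleigh quotient on invariant subspaces.
\<close>

section \<open>Spectral theorem for symmetric matrices\<close>

lemma symmetric_matrix_inner_commute:
  fixes A :: "real^'n^'n"
  assumes "transpose A = A"
  shows "x \<bullet> (A *v y) = (A *v x) \<bullet> y"
  by (metis assms dot_lmul_matrix vector_transpose_matrix)

lemma quadratic_nonneg_imp_linear_coeff_zero: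
  fixes b c :: real
  assumes nonneg: "\<And>t. 0 \<le> t * b + t\<^sup>2 * c"
  shows "b = 0"
proof (cases "c \<le> 0")
  case True
  then show ?thesis using nonneg[of 1] nonneg[of "-1"] by simp
next
  case False
  have "0 \<le> (- b / (2 * c)) * b + (- b / (2 * c))\<^sup>2 * c" by (rule nonneg)
  also have "\<dots> = - b\<^sup>2 / (4 * c)" using False by (simp add: power2_eq_square field_simps)
  finally show ?thesis using False by (simp add: divide_le_0_iff)
qed

lemma rayleigh_maximizer_is_eigenvector:
  fixes A :: "real^'n^'n"
  assumes sym: "transpose A = A" and S: "subspace S" and inv: "\<And>x. x \<in> S \<Longrightarrow> A *v x \<in> S"
    and v: "v \<in> S" "v \<bullet> v = 1"
    and max: "\<And>u. u \<in> S \<Longrightarrow> u \<bullet> (A *v u) \<le> (v \<bullet> (A *v v)) * (u \<bullet> u)"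
  shows "A *v v = (v \<bullet> (A *v v)) *\<^sub>R v"
proof -
  define l where "l = v \<bullet> (A *v v)"
  define w where "w = l *\<^sub>R v - A *v v"
  have w: "w \<in> S" unfolding w_def using S v inv by (intro subspace_diff subspace_scale) auto
  have wv: "v \<bullet> w = 0"
    by (simp add: w_def l_def inner_diff_left inner_diff_right v(2) inner_commute)
  have Av: "A *v v = l *\<^sub>R v - w" by (simp add: w_def)
  have vAw: "v \<bullet> (A *v w) = - (w \<bullet> w)"
    using wv by (simp add: symmetric_matrix_inner_commute[OF sym] Av inner_diff_left)
  \<comment> \<open>\<open>w\<close> is the residual of the eigenvalue equation; maximality along \<open>v + t w\<close> kills it.\<close>
  have "0 \<le> t * (2 * (w \<bullet> w)) + t\<^sup>2 * (l * (w \<bullet> w) - w \<bullet> (A *v w))" for t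
  proof -
    have "(v + t *\<^sub>R w) \<bullet> (A *v (v + t *\<^sub>R w)) \<le> l * ((v + t *\<^sub>R w) \<bullet> (v + t *\<^sub>R w))"
      unfolding l_def using S v w by (intro max subspace_add subspace_scale) auto
    moreover have "(v + t *\<^sub>R w) \<bullet> (A *v (v + t *\<^sub>R w))
        = l + 2 * t * (v \<bullet> (A *v w)) + t\<^sup>2 * (w \<bullet> (A *v w))"
    proof -
      have "w \<bullet> (A *v v) = v \<bullet> (A *v w)"
        using symmetric_matrix_inner_commute[OF sym, of w v] by (simp add: inner_commute)
      then show ?thesis
        by (simp add: l_def matrix_vector_right_distrib matrix_vector_mult_scaleR inner_add_left
            inner_add_right power2_eq_square algebra_simps)
    qed
    moreover have "(v + t *\<^sub>R w) \<bullet> (v + t *\<^sub>R w) = 1 + t\<^sup>2 * (w \<bullet> w)"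
      using v(2) wv by (simp add: inner_add_left inner_add_right power2_eq_square inner_commute)
    ultimately have "l - 2 * t * (w \<bullet> w) + t\<^sup>2 * (w \<bullet> (A *v w)) \<le> l * (1 + t\<^sup>2 * (w \<bullet> w))"
      by (simp add: vAw)
    then show ?thesis by (simp add: algebra_simps)
  qed
  then have "2 * (w \<bullet> w) = 0" by (rule quadratic_nonneg_imp_linear_coeff_zero)
  then have "w = 0" by simp
  then show ?thesis unfolding w_def l_def by simp
qed

lemma symmetric_matrix_eigenvector_in_invariant_subspace:
  fixes A :: "real^'n^'n"
  assumes sym: "transpose A = A" and S: "subspace S" and inv: "\<And>x. x \<in> S \<Longrightarrow> A *v x \<in> S"
    and x: "x \<in> S" "x \<noteq> 0"
  obtains v where "v \<in> S" "norm v = 1" "A *v v = (v \<bullet> (A *v v)) *\<^sub>R v"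
proof -
  define T where "T = S \<inter> sphere 0 1"
  have "compact T" unfolding T_def by (intro closed_Int_compact closed_subspace S compact_sphere)
  moreover have "x /\<^sub>R norm x \<in> T" using x S by (simp add: T_def subspace_scale)
  moreover have "continuous_on T (\<lambda>u. u \<bullet> (A *v u))" by (intro continuous_intros)
  ultimately obtain v where v: "v \<in> T" and max_T: "\<And>u. u \<in> T \<Longrightarrow> u \<bullet> (A *v u) \<le> v \<bullet> (A *v v)"
    using continuous_attains_sup[of T "\<lambda>u. u \<bullet> (A *v u)"] by blast
  have "u \<bullet> (A *v u) \<le> (v \<bullet> (A *v v)) * (u \<bullet> u)" if u: "u \<in> S" for u
  proof (cases "u = 0")
    case False
    then have "u /\<^sub>R norm u \<in> T" using u S by (simp add: T_def subspace_scale)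
    then have "(u /\<^sub>R norm u) \<bullet> (A *v (u /\<^sub>R norm u)) \<le> v \<bullet> (A *v v)" by (rule max_T)
    then have "(u \<bullet> (A *v u)) / (u \<bullet> u) \<le> v \<bullet> (A *v v)"
      by (simp add: matrix_vector_mult_scaleR dot_square_norm power2_eq_square field_simps)
    then show ?thesis using False by (simp add: divide_le_eq mult.commute)
  qed simp
  moreover have "v \<in> S" "v \<bullet> v = 1" using v by (auto simp: T_def norm_eq_1)
  ultimately show ?thesis
    using that rayleigh_maximizer_is_eigenvector[OF sym S inv] by (metis norm_eq_1)
qed

definition orthonormal_eigenvectors :: "real^'n^'n \<Rightarrow> (real^'n) set \<Rightarrow> bool" where
  "orthonormal_eigenvectors A E \<longleftrightarrow>
     pairwise orthogonal E \<and> (\<forall>e\<in>E. norm e = 1 \<and> A *v e = (e \<bullet> (A *v e)) *\<^sub>R e)"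

lemma orthonormal_eigenvectors_finite_card:
  fixes E :: "(real^'n) set"
  assumes "orthonormal_eigenvectors A E"
  shows "finite E" "card E \<le> CARD('n)"
proof -
  have "independent E"
    using assms unfolding orthonormal_eigenvectors_def
    by (intro pairwise_orthogonal_independent) auto
  then show "finite E" "card E \<le> CARD('n)" using independent_bound[of E] by auto
qed

lemma orthonormal_eigenvectors_extend:
  fixes A :: "real^'n^'n"
  assumes sym: "transpose A = A" and E: "orthonormal_eigenvectors A E" and span: "span E \<noteq> UNIV"
  obtains v where "v \<notin> E" "orthonormal_eigenvectors A (insert v E)"
proof -
  define S where "S = {x. \<forall>e\<in>E. orthogonal e x}"
  have S: "subspace S" unfolding S_def by (rule subspace_orthogonal_to_vectors)
  have "A *v x \<in> S" if "x \<in> S" for x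
  proof -
    have "e \<bullet> (A *v x) = (e \<bullet> (A *v e)) * (e \<bullet> x)" if "e \<in> E" for e
      using E that by (metis inner_scaleR_left orthonormal_eigenvectors_def symmetric_matrix_inner_commute[OF sym])
    then show ?thesis using \<open>x \<in> S\<close> by (simp add: S_def orthogonal_def)
  qed
  moreover obtain x where "x \<in> S" "x \<noteq> 0"
  proof -
    have "dim E < DIM(real^'n)"
      using span dim_eq_full[of E] dim_subset_UNIV[of E] by linarith
    then obtain x where "x \<noteq> 0" "\<And>y. y \<in> span E \<Longrightarrow> orthogonal x y"
      using orthogonal_to_subspace_exists by blast
    moreover have "x \<in> S" if "\<And>y. y \<in> span E \<Longrightarrow> orthogonal x y"
      using that unfolding S_def by (blast intro: span_base orthogonal_commute[THEN iffD1])
    ultimately show ?thesis using that by blast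
  qed
  ultimately obtain v where "v \<in> S" "norm v = 1" "A *v v = (v \<bullet> (A *v v)) *\<^sub>R v"
    using symmetric_matrix_eigenvector_in_invariant_subspace[OF sym S] by metis
  moreover have "v \<notin> E" using \<open>v \<in> S\<close> \<open>norm v = 1\<close> by (auto simp: S_def orthogonal_def)
  ultimately show ?thesis
    using E that by (auto simp: orthonormal_eigenvectors_def S_def pairwise_insert orthogonal_commute)
qed

lemma symmetric_matrix_orthonormal_eigenbasis:
  fixes A :: "real^'n^'n"
  assumes sym: "transpose A = A"
  obtains E where "orthonormal_eigenvectors A E" "finite E" "span E = UNIV"
proof -
  have "orthonormal_eigenvectors A {}" by (simp add: orthonormal_eigenvectors_def)
  then obtain E where E: "orthonormal_eigenvectors A E"
    and maximal: "\<And>E'. orthonormal_eigenvectors A E' \<Longrightarrow> card E' \<le> card E"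
    using ex_has_greatest_nat[of "orthonormal_eigenvectors A" "{}" card "Suc CARD('n)"]
      orthonormal_eigenvectors_finite_card(2) by (metis less_Suc_eq_le)
  have "span E = UNIV"
  proof (rule ccontr)
    assume "span E \<noteq> UNIV"
    then obtain v where "v \<notin> E" "orthonormal_eigenvectors A (insert v E)"
      using orthonormal_eigenvectors_extend[OF sym E] by blast
    then show False
      using maximal orthonormal_eigenvectors_finite_card(1)[OF E] by fastforce
  qed
  then show ?thesis using that E orthonormal_eigenvectors_finite_card(1) by blast
qed

section \<open>Positive semidefinite square roots\<close>

lemma orthonormal_eigenvectors_inner:
  assumes "orthonormal_eigenvectors A E" "b \<in> E" "c \<in> E"
  shows "b \<bullet> c = (if b = c then 1 else 0)"
  using assms by (auto simp: orthonormal_eigenvectors_def pairwise_def orthogonal_def norm_eq_1)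

lemma matrix_eq_on_spanning_set:
  fixes A B :: "real^'n^'m"
  assumes "span E = UNIV" and "\<And>b. b \<in> E \<Longrightarrow> A *v b = B *v b"
  shows "A = B"
  unfolding matrix_eq
  using linear_eq_on_span[OF matrix_vector_mul_linear matrix_vector_mul_linear, of E] assms by auto

lemma psd_mat_square_eigenvector:
  fixes T :: "real^'n^'n"
  assumes T: "psd_mat T" and b: "(T ** T) *v b = \<mu> *\<^sub>R b" and "0 \<le> \<mu>"
  shows "T *v b = sqrt \<mu> *\<^sub>R b"
proof (cases "\<mu> = 0")
  case True
  have "(T *v b) \<bullet> (T *v b) = b \<bullet> ((T ** T) *v b)"
    using T by (simp add: psd_mat_def symmetric_matrix_inner_commute matrix_vector_mul_assoc[symmetric])
  then show ?thesis using b True by simp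
next
  case False
  define s where "s = sqrt \<mu>"
  have "s > 0" using False \<open>0 \<le> \<mu>\<close> by (simp add: s_def)
  define u where "u = T *v b - s *\<^sub>R b"
  have "T *v u + s *\<^sub>R u = (T ** T) *v b - (s * s) *\<^sub>R b"
    by (simp add: u_def matrix_vector_mul_assoc[symmetric] matrix_vector_mult_diff_distrib
        matrix_vector_mult_scaleR algebra_simps)
  then have Tu: "T *v u = - s *\<^sub>R u" using b \<open>0 \<le> \<mu>\<close> by (simp add: s_def eq_neg_iff_add_eq_0)
  have "0 \<le> u \<bullet> (T *v u)" using T by (simp add: psd_mat_def)
  then have "s * (u \<bullet> u) \<le> 0" by (simp add: Tu)
  then have "u \<bullet> u \<le> 0" using \<open>s > 0\<close> by (simp add: mult_le_0_iff)
  then have "u = 0" by (metis inner_eq_zero_iff inner_ge_zero order_antisym)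
  then show ?thesis by (simp add: u_def s_def)
qed

lemma psd_mat_sqrt_exists:
  fixes A :: "real^'n^'n"
  assumes psd: "psd_mat A"
  shows "\<exists>S. psd_mat S \<and> S ** S = A"
proof -
  obtain E where E: "orthonormal_eigenvectors A E" and "finite E" and span: "span E = UNIV"
    using symmetric_matrix_orthonormal_eigenbasis psd unfolding psd_mat_def by blast
  define s where "s b = sqrt (b \<bullet> (A *v b))" for b
  define S :: "real^'n^'n" where "S = (\<chi> i j. \<Sum>b\<in>E. s b * b$i * b$j)"
  have S_apply: "S *v x = (\<Sum>b\<in>E. (s b * (b \<bullet> x)) *\<^sub>R b)" for x
  proof -
    have "(S *v x)$i = (\<Sum>b\<in>E. s b * (b \<bullet> x) * b$i)" for i
    proof -
      have "(S *v x)$i = (\<Sum>j\<in>UNIV. \<Sum>b\<in>E. s b * b$i * b$j * x$j)"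
        by (simp add: S_def matrix_vector_mult_def sum_distrib_right)
      also have "\<dots> = (\<Sum>b\<in>E. s b * (b \<bullet> x) * b$i)"
        by (subst sum.swap) (simp add: inner_vec_def sum_distrib_left sum_distrib_right mult_ac)
      finally show ?thesis .
    qed
    then show ?thesis by (simp add: vec_eq_iff sum_component)
  qed
  have S_eigen: "S *v b = s b *\<^sub>R b" if "b \<in> E" for b
  proof -
    have "S *v b = (\<Sum>c\<in>E. if c = b then s c *\<^sub>R c else 0)"
      unfolding S_apply using orthonormal_eigenvectors_inner[OF E _ that]
      by (intro sum.cong) auto
    then show ?thesis using \<open>finite E\<close> that by (simp add: sum.delta')
  qed
  have "transpose S = S" by (simp add: S_def transpose_def vec_eq_iff mult_ac)
  moreover have "0 \<le> v \<bullet> (S *v v)" for v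
  proof -
    have "v \<bullet> (S *v v) = (\<Sum>b\<in>E. s b * (b \<bullet> v)\<^sup>2)"
      by (simp add: S_apply inner_sum_right inner_commute[of v] power2_eq_square mult.assoc)
    also have "\<dots> \<ge> 0" using psd by (auto simp: s_def psd_mat_def intro!: sum_nonneg)
    finally show ?thesis .
  qed
  moreover have "S ** S = A"
  proof (rule matrix_eq_on_spanning_set[OF span])
    fix b assume "b \<in> E"
    have "0 \<le> b \<bullet> (A *v b)" using psd by (simp add: psd_mat_def)
    then have "s b * s b = b \<bullet> (A *v b)" by (simp add: s_def)
    then show "(S ** S) *v b = A *v b"
      using E \<open>b \<in> E\<close> by (simp add: S_eigen matrix_vector_mul_assoc[symmetric]
          matrix_vector_mult_scaleR orthonormal_eigenvectors_def)
  qed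
  ultimately show ?thesis unfolding psd_mat_def by blast
qed

lemma psd_mat_sqrt_unique:
  fixes A S T :: "real^'n^'n"
  assumes A: "psd_mat A" and S: "psd_mat S" "S ** S = A" and T: "psd_mat T" "T ** T = A"
  shows "S = T"
proof -
  obtain E where E: "orthonormal_eigenvectors A E" and span: "span E = UNIV"
    using symmetric_matrix_orthonormal_eigenbasis A unfolding psd_mat_def by blast
  show ?thesis
  proof (rule matrix_eq_on_spanning_set[OF span])
    fix b assume "b \<in> E"
    define \<mu> where "\<mu> = b \<bullet> (A *v b)"
    have "A *v b = \<mu> *\<^sub>R b"
      using E \<open>b \<in> E\<close> unfolding orthonormal_eigenvectors_def \<mu>_def by blast
    moreover have "0 \<le> \<mu>" using A by (simp add: psd_mat_def \<mu>_def)
    ultimately have "S *v b = sqrt \<mu> *\<^sub>R b" and "T *v b = sqrt \<mu> *\<^sub>R b"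
      using psd_mat_square_eigenvector[OF S(1), of b \<mu>] psd_mat_square_eigenvector[OF T(1), of b \<mu>]
      by (simp_all add: S(2) T(2))
    then show "S *v b = T *v b" by simp
  qed
qed

lemma psd_sqrt_square:
  fixes A :: "real^'n^'n"
  assumes "psd_mat A"
  shows "psd_sqrt A ** psd_sqrt A = A"
proof -
  have "\<exists>!S. psd_mat S \<and> S ** S = A"
    using psd_mat_sqrt_exists[OF assms] psd_mat_sqrt_unique[OF assms] by blast
  then have "psd_mat (psd_sqrt A) \<and> psd_sqrt A ** psd_sqrt A = A"
    unfolding psd_sqrt_def by (rule theI')
  then show ?thesis ..
qed

lemma matrix_inv_right:
  fixes M :: "'a::semiring_1^'n^'n"
  assumes "invertible M"
  shows "M ** matrix_inv M = mat 1"
  using assms someI_ex[of "\<lambda>M'. M ** M' = mat 1 \<and> M' ** M = mat 1"]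
  unfolding invertible_def matrix_inv_def by blast

lemma matrix_inv_left:
  fixes M :: "'a::field^'n^'n"
  assumes "invertible M"
  shows "matrix_inv M ** M = mat 1"
  using assms matrix_inv_right matrix_left_right_inverse by blast

lemma matrix_inv_commute:
  fixes M S :: "'a::field^'n^'n"
  assumes M: "invertible M" and comm: "S ** M = M ** S"
  shows "S ** matrix_inv M = matrix_inv M ** S"
proof -
  have "S ** matrix_inv M = matrix_inv M ** (M ** S) ** matrix_inv M"
    by (simp add: matrix_mul_assoc matrix_inv_left[OF M])
  also have "\<dots> = matrix_inv M ** S"
    by (simp add: comm[symmetric] matrix_mul_assoc[symmetric] matrix_inv_right[OF M])
  finally show ?thesis .
qed

lemma psd_mat_scaleR_add_id_invertible:
  fixes K :: "real^'n^'n"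
  assumes K: "psd_mat K" and "0 \<le> c"
  shows "invertible (c *\<^sub>R K + mat 1)"
proof -
  have "v = 0" if "(c *\<^sub>R K + mat 1) *v v = 0" for v
  proof -
    have "c * (v \<bullet> (K *v v)) + v \<bullet> v = v \<bullet> ((c *\<^sub>R K + mat 1) *v v)"
      by (simp add: matrix_vector_mult_add_rdistrib scaleR_matrix_vector_assoc[symmetric]
          inner_add_right)
    also have "\<dots> = 0" using that by simp
    finally have "c * (v \<bullet> (K *v v)) + v \<bullet> v = 0" .
    moreover have "0 \<le> c * (v \<bullet> (K *v v))" using K \<open>0 \<le> c\<close> by (simp add: psd_mat_def)
    ultimately show "v = 0" by (metis add_nonneg_eq_0_iff inner_eq_zero_iff inner_ge_zero)
  qed
  then show ?thesis using matrix_left_invertible_ker invertible_left_inverse by blast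
qed

lemma matrix_commute_scaleR_square_add_id:
  fixes S :: "real^'n^'n"
  shows "S ** (c *\<^sub>R (S ** S) + mat 1) = (c *\<^sub>R (S ** S) + mat 1) ** S"
  by (simp add: matrix_eq matrix_vector_mul_assoc[symmetric] matrix_vector_mult_add_rdistrib
      scaleR_matrix_vector_assoc[symmetric] matrix_vector_right_distrib matrix_vector_mult_scaleR)

lemma psd_sqrt_sandwich_matrix_inv:
  fixes K :: "real^'n^'n"
  assumes K: "psd_mat K" and "0 \<le> c"
  shows "psd_sqrt K ** matrix_inv (c *\<^sub>R K + mat 1) ** psd_sqrt K
       = K ** matrix_inv (c *\<^sub>R K + mat 1)"
proof -
  define S where "S = psd_sqrt K"
  have SS: "S ** S = K" unfolding S_def by (rule psd_sqrt_square[OF K])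
  have "matrix_inv (c *\<^sub>R K + mat 1) ** S = S ** matrix_inv (c *\<^sub>R K + mat 1)"
    using psd_mat_scaleR_add_id_invertible[OF assms] matrix_commute_scaleR_square_add_id[of S c]
    by (simp add: SS matrix_inv_commute)
  then show ?thesis by (metis S_def SS matrix_mul_assoc)
qed

section \<open>The penalised objective on a Hilbert space\<close>

definition gram_matrix :: "('n \<Rightarrow> 'a::real_inner) \<Rightarrow> real^'n^'n" where
  "gram_matrix k = (\<chi> i j. k i \<bullet> k j)"

lemma psd_gram_matrix:
  fixes k :: "'n::finite \<Rightarrow> 'a::real_inner"
  shows "psd_mat (gram_matrix k)"
proof -
  have "v \<bullet> (gram_matrix k *v v) = (\<Sum>i\<in>UNIV. v$i *\<^sub>R k i) \<bullet> (\<Sum>i\<in>UNIV. v$i *\<^sub>R k i)" for v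
    by (simp add: gram_matrix_def inner_vec_def matrix_vector_mult_def inner_sum_left
        inner_sum_right sum_distrib_left mult_ac) (subst sum.swap, simp add: mult_ac)
  then show ?thesis
    by (simp add: psd_mat_def gram_matrix_def transpose_def vec_eq_iff inner_commute)
qed

lemma SUP_sample_objective_eq_gram_form:
  fixes k :: "'n::finite \<Rightarrow> 'a::real_inner" and \<psi> :: "real^'n"
  assumes "0 \<le> c" and "0 < lam"
  shows "(SUP f. (\<Sum>i\<in>UNIV. \<psi>$i * (f \<bullet> k i)) - lam * ((norm f)\<^sup>2 + c * (\<Sum>i\<in>UNIV. (f \<bullet> k i)\<^sup>2)))
       = 1 / (4 * lam) * (\<psi> \<bullet> ((gram_matrix k ** matrix_inv (c *\<^sub>R gram_matrix k + mat 1)) *v \<psi>))"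
proof -
  define G where "G = gram_matrix k"
  define M where "M = c *\<^sub>R G + mat 1"
  define L where "L f = (\<Sum>i\<in>UNIV. \<psi>$i * (f \<bullet> k i))" for f
  define B where "B f d = f \<bullet> d + c * (\<Sum>i\<in>UNIV. (f \<bullet> k i) * (d \<bullet> k i))" for f d
  define J where "J f = L f - lam * B f f" for f
  define a where "a = (1 / (2 * lam)) *\<^sub>R (matrix_inv M *v \<psi>)"
  define f0 where "f0 = (\<Sum>j\<in>UNIV. a$j *\<^sub>R k j)"
  have f0_k: "f0 \<bullet> k i = (G *v a)$i" for i
    unfolding f0_def G_def gram_matrix_def
    by (simp add: inner_sum_left matrix_vector_mult_def) (simp add: inner_commute mult.commute)
  have "M *v a = (1 / (2 * lam)) *\<^sub>R \<psi>"
    using psd_mat_scaleR_add_id_invertible[OF psd_gram_matrix[of k] \<open>0 \<le> c\<close>]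
    by (simp add: a_def M_def G_def matrix_vector_mult_scaleR matrix_vector_mul_assoc matrix_inv_right)
  then have a_eq: "a$i + c * (G *v a)$i = \<psi>$i / (2 * lam)" for i
    by (simp add: M_def matrix_vector_mult_add_rdistrib scaleR_matrix_vector_assoc[symmetric]
        vec_eq_iff add.commute)
  have first_order: "B d f0 = L d / (2 * lam)" for d
  proof -
    have "d \<bullet> f0 = (\<Sum>i\<in>UNIV. a$i * (d \<bullet> k i))" by (simp add: f0_def inner_sum_right)
    then have "B d f0 = (\<Sum>i\<in>UNIV. (d \<bullet> k i) * (a$i + c * (G *v a)$i))"
      by (simp add: B_def f0_k sum_distrib_left sum.distrib algebra_simps)
    then show ?thesis
      by (simp add: a_eq L_def sum_divide_distrib mult_ac)
  qed
  have shift: "J f = J f0 - lam * B (f - f0) (f - f0)" for f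
  proof -
    have "J (f0 + d) = J f0 + (L d - 2 * lam * B d f0) - lam * B d d" for d
      by (simp add: J_def L_def B_def inner_add_left inner_add_right inner_commute
          sum.distrib sum_distrib_left algebra_simps power2_eq_square)
    from this[of "f - f0"] show ?thesis using first_order \<open>0 < lam\<close> by simp
  qed
  have "B d d \<ge> 0" for d using \<open>0 \<le> c\<close> by (simp add: B_def sum_nonneg)
  then have "J f \<le> J f0" for f using shift[of f] \<open>0 < lam\<close> by (simp add: mult_nonneg_nonneg)
  then have "(SUP f. J f) = J f0" by (intro cSup_eq_maximum) auto
  moreover have "J f0 = 1 / (4 * lam) * (\<psi> \<bullet> ((G ** matrix_inv M) *v \<psi>))"
  proof -
    have "J f0 = L f0 / 2" using first_order[of f0] \<open>0 < lam\<close> by (simp add: J_def)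
    also have "L f0 = \<psi> \<bullet> (G *v a)" by (simp add: L_def f0_k inner_vec_def)
    finally show ?thesis
      by (simp add: a_def matrix_vector_mult_scaleR matrix_vector_mul_assoc)
  qed
  moreover have "B f f = (norm f)\<^sup>2 + c * (\<Sum>i\<in>UNIV. (f \<bullet> k i)\<^sup>2)" for f
    unfolding B_def power2_norm_eq_inner by (simp add: power2_eq_square)
  ultimately show ?thesis by (simp add: J_def L_def G_def M_def)
qed

lemma rkhs_kernel_sections:
  fixes ev :: "'f::{real_inner,complete_space} \<Rightarrow> 'z \<Rightarrow> real"
  assumes "rkhs ev K"
  obtains k where "\<And>f z. ev f z = f \<bullet> k z" and "\<And>z w. K z w = k z \<bullet> k w"
proof -
  obtain k where k: "\<And>z. (\<forall>w. ev (k z) w = K w z) \<and> (\<forall>f. ev f z = f \<bullet> k z)"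
    using assms unfolding rkhs_def by metis
  then have "K z w = k z \<bullet> k w" for z w by (metis inner_commute)
  with k show ?thesis using that by blast
qed

theorem proposition1:
  fixes ev :: "'f::{real_inner,complete_space} \<Rightarrow> 'z \<Rightarrow> real"
    and K :: "'z \<Rightarrow> 'z \<Rightarrow> real"
    and y :: "'n::finite \<Rightarrow> real" and x :: "'n \<Rightarrow> 'x" and z :: "'n \<Rightarrow> 'z"
    and h :: "'x \<Rightarrow> real"
    and U \<delta> lam :: real
  assumes "rkhs ev K" and "U > 0" and "\<delta> > 0" and "lam > 0"
  defines "n \<equiv> real CARD('n)"
  defines "Kn \<equiv> (\<chi> i j. K (z i) (z j)) :: real^'n^'n"
  defines "\<psi>n \<equiv> (\<chi> i. (y i - h (x i)) / n) :: real^'n"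
  defines "\<Psi> \<equiv> \<lambda>f. (1 / n) * (\<Sum>i\<in>UNIV. (y i - h (x i)) * ev f (z i))"
  defines "norm2n_sq \<equiv> \<lambda>f. (1 / n) * (\<Sum>i\<in>UNIV. (ev f (z i))\<^sup>2)"
  shows "(SUP f. \<Psi> f - lam * ((norm f)\<^sup>2 + U / \<delta>\<^sup>2 * norm2n_sq f))
           = 1 / (4 * lam) * (\<psi>n \<bullet> ((psd_sqrt Kn ** matrix_inv ((U / (n * \<delta>\<^sup>2)) *\<^sub>R Kn + mat 1)
                                    ** psd_sqrt Kn) *v \<psi>n))
       \<and> 1 / (4 * lam) * (\<psi>n \<bullet> ((psd_sqrt Kn ** matrix_inv ((U / (n * \<delta>\<^sup>2)) *\<^sub>R Kn + mat 1)
                                    ** psd_sqrt Kn) *v \<psi>n))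
           = 1 / (4 * lam) * (\<psi>n \<bullet> ((Kn ** matrix_inv ((U / (n * \<delta>\<^sup>2)) *\<^sub>R Kn + mat 1)) *v \<psi>n))"
proof -
  obtain k where ev_k: "\<And>f w. ev f w = f \<bullet> k w" and K_k: "\<And>v w. K v w = k v \<bullet> k w"
    using rkhs_kernel_sections[OF \<open>rkhs ev K\<close>] by blast
  define c where "c = U / (n * \<delta>\<^sup>2)"
  have "0 \<le> c" using \<open>U > 0\<close> by (simp add: c_def n_def)
  have Kn: "Kn = gram_matrix (k \<circ> z)" by (simp add: Kn_def gram_matrix_def K_k)
  have objective: "\<Psi> f - lam * ((norm f)\<^sup>2 + U / \<delta>\<^sup>2 * norm2n_sq f)
      = (\<Sum>i\<in>UNIV. \<psi>n$i * (f \<bullet> (k \<circ> z) i))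
        - lam * ((norm f)\<^sup>2 + c * (\<Sum>i\<in>UNIV. (f \<bullet> (k \<circ> z) i)\<^sup>2))" for f
    by (simp add: \<Psi>_def norm2n_sq_def \<psi>n_def c_def ev_k sum_distrib_left sum_divide_distrib mult_ac)
  show ?thesis
    unfolding objective c_def[symmetric] Kn
    using SUP_sample_objective_eq_gram_form[OF \<open>0 \<le> c\<close> \<open>lam > 0\<close>, where k = "k \<circ> z" and \<psi> = \<psi>n]
      psd_sqrt_sandwich_matrix_inv[OF psd_gram_matrix[of "k \<circ> z"] \<open>0 \<le> c\<close>]
    by simp
qed

end
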